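(* Let $(X,\mathcal{A},p)$ be a standard Borel probability space and let $e:(X,\mathcal{A},p)\to(X,\mathcal{A},p)$ be a measure-preserving Markov kernel that is $p$-a.s. idempotent (for all $B\in\mathcal{A}$, $\int_X e(B\mid x')\,e(dx'\mid x)=e(B\mid x)$ for $p$-a.a. $x$). Let $\mathcal{I}_e=\{B\in\mathcal{A}: e(B\mid x)=1_B(x)\text{ for }p\text{-a.a. }x\}$. Let $\pi:(X,\mathcal{A},p)\to(X,\mathcal{I}_e,p)$ be the kernel $\pi(B\mid x)=1_B(x)$ and $\pi^+:(X,\mathcal{I}_e,p)\to(X,\mathcal{A},p)$ the kernel $\pi^+(A\mid x)=\mathbb{P}[A\mid\mathcal{I}_e](x)$ (a regular version of the conditional probability). Then $\pi\circ\pi^+=\mathrm{id}_{(X,\mathcal{I}_e,p)}$ and $\pi^+\circ\pi=e$, up to almost sure equality of kernels; i.e. $((X,\mathcal{I}_e,p),\pi^+,\pi)$ splits $e$ in $\mathsf{GKrn}$.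
   Context: A Markov kernel $k$ assigns probability measures $k(\cdot\mid x)$ measurably in $x$; measure-preserving means $\int k(B\mid x)p(dx)=q(B)$; composition $(\ell\circ k)(C\mid x)=\int\ell(C\mid y)k(dy\mid x)$; two kernels are identified if for every measurable $B$ they agree $p$-a.e. $\mathsf{GKrn}$ is the category of probability spaces with these equivalence classes as morphisms. $\mathcal{I}_e$ is a $\sigma$-algebra (the invariant $\sigma$-algebra of $e$). *)

theory Defs
  imports "HOL-Probability.Probability"
begin

definition standard_borel :: "'a measure \<Rightarrow> bool" where
  "standard_borel M \<longleftrightarrow>
     (\<exists>T :: 'a topology. completely_metrizable_space T \<and> separable_space T \<and>
        space M = topspace T \<and> sets M = sigma_sets (topspace T) {U. openin T U})"

text \<open>A Markov kernel from (the measurable space of) M to N is a measurable map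
  into the space of probability measures on N; k(B|x) = measure (k x) B.\<close>
definition markov_kernel :: "'a measure \<Rightarrow> 'b measure \<Rightarrow> ('a \<Rightarrow> 'b measure) \<Rightarrow> bool" where
  "markov_kernel M N k \<longleftrightarrow> k \<in> M \<rightarrow>\<^sub>M prob_algebra N"

definition measure_preserving_kernel ::
  "'a measure \<Rightarrow> 'b measure \<Rightarrow> ('a \<Rightarrow> 'b measure) \<Rightarrow> bool" where
  "measure_preserving_kernel p q k \<longleftrightarrow> markov_kernel p q k \<and>
     (\<forall>B\<in>sets q. (\<integral>x. measure (k x) B \<partial>p) = measure q B)"

text \<open>Composition (l o k)(C|x) = integral of l(C|y) k(dy|x), i.e. the Giry-monad bind.\<close>
definition kcomp :: "('b \<Rightarrow> 'c measure) \<Rightarrow> ('a \<Rightarrow> 'b measure) \<Rightarrow> ('a \<Rightarrow> 'c measure)" where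
  "kcomp l k = (\<lambda>x. bind (k x) l)"

definition kernel_ae_eq :: "'a measure \<Rightarrow> 'b measure \<Rightarrow> ('a \<Rightarrow> 'b measure) \<Rightarrow> ('a \<Rightarrow> 'b measure) \<Rightarrow> bool" where
  "kernel_ae_eq p N k l \<longleftrightarrow> (\<forall>B\<in>sets N. AE x in p. measure (k x) B = measure (l x) B)"

definition invariant_sets :: "'a measure \<Rightarrow> ('a \<Rightarrow> 'a measure) \<Rightarrow> 'a set set" where
  "invariant_sets p e = {B\<in>sets p. AE x in p. measure (e x) B = indicator B x}"

definition invariant_space :: "'a measure \<Rightarrow> ('a \<Rightarrow> 'a measure) \<Rightarrow> 'a measure" where
  "invariant_space p e = restr_to_subalg p (sigma (space p) (invariant_sets p e))"

end

theory Submission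
  imports Defs
begin

(* For B in A, the function h = e(B|.) is bounded and, by idempotence, harmonic:
   the integral of h against e(.|x) is h(x) for p-a.e. x.  Stationarity of p makes the
   conditional variance of h under e(.|x) have p-integral
   int (int h^2 de(.|x)) dp - int h^2 dp = 0, so h is e(.|x)-a.s. equal to h(x).
   Consequently every level set of h is invariant and h is I_e-measurable.
   A set C is invariant iff e(.|x) is concentrated on C for a.e. x in C and on its
   complement for a.e. x outside C; in this form the invariant sets are visibly a
   sigma-algebra, and stationarity gives int_C e(B|x) dp = p(C n B).  Hence e(B|.) is a
   version of P[B|I_e] = pi+(B|.), i.e. pi+ o pi = pi+ = e.  For B in I_e the
   conditional probability is 1_B itself, which gives pi o pi+ = id. *)

lemma (in prob_space) AE_eq_expectation_if_variance_eq_0: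
  fixes X :: "'a \<Rightarrow> real"
  assumes "integrable M (\<lambda>x. (X x - expectation X)\<^sup>2)" and "variance X = 0"
  shows "AE x in M. X x = expectation X"
  using integral_nonneg_eq_0_iff_AE[OF assms(1)] assms(2) by auto

lemma measure_bind_return_subalgebra:
  assumes N: "prob_space N" and sets_N: "sets N = sets M"
    and F: "subalgebra M F" and B: "B \<in> sets F"
  shows "measure (bind N (return F)) B = measure N B"
proof -
  interpret N: prob_space N by (rule N)
  have "return F \<in> N \<rightarrow>\<^sub>M subprob_algebra F"
    using F return_measurable[of F]
    by (simp add: measurable_from_subalg measurable_cong_sets[OF sets_N refl])
  then have "measure (bind N (return F)) B = (\<integral>y. measure (return F y) B \<partial>N)"
    using B by (rule N.measure_bind)
  also have "\<dots> = measure N B"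
    using B F sets_N
    by (auto simp: measure_return subalgebra_def sets.Int_space_eq2
        simp flip: sets_eq_imp_space_eq[OF sets_N])
  finally show ?thesis .
qed

lemma kcomp_return_regular_cond_prob:
  fixes M G :: "'a measure" and k :: "'a \<Rightarrow> 'a measure"
  defines "F \<equiv> restr_to_subalg M G"
  assumes M: "prob_space M" and G: "subalgebra M G"
    and k: "k \<in> F \<rightarrow>\<^sub>M prob_algebra M"
    and cond_prob: "\<forall>A\<in>sets M. AE x in M. measure (k x) A = real_cond_exp M F (indicator A) x"
  shows "kernel_ae_eq F F (kcomp (return F) k) (return F)"
  unfolding kernel_ae_eq_def
proof
  fix B assume B_F: "B \<in> sets F"
  have F: "subalgebra M F"
    using G by (simp add: subalgebra_def F_def sets_restr_to_subalg space_restr_to_subalg)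
  interpret finite_measure_subalgebra M F
    using M F by (simp add: finite_measure_subalgebra_def finite_measure_subalgebra_axioms_def
        prob_space_def)
  have B_G: "B \<in> sets G" and B: "B \<in> sets M"
    using B_F G by (auto simp: F_def sets_restr_to_subalg subalgebra_def)
  have "AE x in M. real_cond_exp M F (indicator B) x = indicator B x"
    using B B_G
    by (intro real_cond_exp_F_meas)
      (auto simp: F_def emeasure_eq_measure intro!: measurable_in_subalg[OF G])
  with cond_prob B have "AE x in M. measure (k x) B = indicator B x"
    by auto
  then have "AE x in F. measure (k x) B = indicator B x"
    unfolding F_def
    using G B_G measurable_compose[OF k[unfolded F_def] measurable_measure_prob_algebra[OF B]]
    by (intro AE_restr_to_subalg2) (auto simp: measurable_in_subalg')
  with AE_space show "AE x in F. measure (kcomp (return F) k x) B = measure (return F x) B"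
  proof eventually_elim
    case (elim x)
    have "prob_space (k x)" "sets (k x) = sets M"
      using measurable_space[OF k elim(1)] by (simp_all add: space_prob_algebra)
    then have "measure (bind (k x) (return F)) B = measure (k x) B"
      using F B_F by (rule measure_bind_return_subalgebra)
    with elim(2) B_F show ?case
      by (simp add: kcomp_def measure_return)
  qed
qed

locale markov_endokernel =
  fixes p :: "'a measure" and e :: "'a \<Rightarrow> 'a measure"
  assumes markov_kernel: "markov_kernel p p e"
begin

lemma kernel_prob_algebra: "e \<in> p \<rightarrow>\<^sub>M prob_algebra p"
  using markov_kernel by (simp add: markov_kernel_def)

lemma kernel_subprob_algebra[measurable]: "e \<in> p \<rightarrow>\<^sub>M subprob_algebra p"
  using kernel_prob_algebra by (rule measurable_prob_algebraD)

lemma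
  assumes "x \<in> space p"
  shows prob_space_e: "prob_space (e x)"
    and sets_e: "sets (e x) = sets p"
    and space_e: "space (e x) = space p"
  using measurable_space[OF kernel_prob_algebra assms]
  by (auto simp: space_prob_algebra dest: sets_eq_imp_space_eq)

lemma measure_e_eq_indicator_iff:
  assumes x: "x \<in> space p" and C: "C \<in> sets p"
  shows "measure (e x) C = indicator C x \<longleftrightarrow> (AE y in e x. y \<in> C \<longleftrightarrow> x \<in> C)"
proof -
  interpret E: prob_space "e x" using prob_space_e[OF x] .
  have "C \<in> E.events" using C sets_e[OF x] by simp
  then show ?thesis by (cases "x \<in> C") (simp_all add: E.prob_eq_1 E.prob_eq_0)
qed

lemma invariant_sets_iff:
  "C \<in> invariant_sets p e \<longleftrightarrow> C \<in> sets p \<and> (AE x in p. AE y in e x. y \<in> C \<longleftrightarrow> x \<in> C)"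
  unfolding invariant_sets_def using measure_e_eq_indicator_iff by (auto cong: AE_cong)

lemma integrable_e_bounded:
  fixes f :: "'a \<Rightarrow> real"
  assumes f: "f \<in> borel_measurable p" and bounded: "\<And>y. y \<in> space p \<Longrightarrow> \<bar>f y\<bar> \<le> c"
    and x: "x \<in> space p"
  shows "integrable (e x) f"
proof -
  interpret E: prob_space "e x" using prob_space_e[OF x] .
  show ?thesis
    using f bounded by (intro E.integrable_const_bound[where B=c])
      (auto simp: space_e[OF x] measurable_cong_sets[OF sets_e[OF x] refl])
qed

lemma abs_integral_e_le:
  fixes f :: "'a \<Rightarrow> real"
  assumes f: "f \<in> borel_measurable p" and bounded: "\<And>y. y \<in> space p \<Longrightarrow> \<bar>f y\<bar> \<le> c"
    and x: "x \<in> space p"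
  shows "\<bar>\<integral>y. f y \<partial>e x\<bar> \<le> c"
proof -
  interpret E: prob_space "e x" using prob_space_e[OF x] .
  have "\<bar>\<integral>y. f y \<partial>e x\<bar> \<le> (\<integral>y. \<bar>f y\<bar> \<partial>e x)"
    by (rule integral_abs_bound)
  also have "\<dots> \<le> c"
    using integrable_e_bounded[OF f bounded x] bounded
    by (intro E.integral_le_const) (auto simp: space_e[OF x])
  finally show ?thesis .
qed

lemma AE_e_eq_if_variance_e_eq_0:
  fixes h :: "'a \<Rightarrow> real"
  assumes h: "h \<in> borel_measurable p" and bounded: "\<And>y. y \<in> space p \<Longrightarrow> \<bar>h y\<bar> \<le> c"
    and x: "x \<in> space p" and harmonic: "(\<integral>y. h y \<partial>e x) = h x"
    and variance: "prob_space.variance (e x) h = 0"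
  shows "AE y in e x. h y = h x"
proof -
  interpret E: prob_space "e x" using prob_space_e[OF x] .
  have "\<bar>(h y - h x)\<^sup>2\<bar> \<le> (2 * c)\<^sup>2" if "y \<in> space p" for y
    using bounded[OF that] bounded[OF x] power_mono[of "\<bar>h y - h x\<bar>" "2 * c" 2]
    by simp
  then have "integrable (e x) (\<lambda>y. (h y - E.expectation h)\<^sup>2)"
    using h x harmonic by (intro integrable_e_bounded) auto
  then have "AE y in e x. h y = E.expectation h"
    using variance by (rule E.AE_eq_expectation_if_variance_eq_0)
  with harmonic show ?thesis
    by simp
qed

lemma measure_e_le_1: "x \<in> space p \<Longrightarrow> measure (e x) B \<le> 1"
  using prob_space.prob_le_1[OF prob_space_e] .

lemma AE_e_in_space: "x \<in> space p \<Longrightarrow> AE y in e x. y \<in> space p"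
  using AE_space[of "e x"] by (simp add: space_e)

lemma AE_AE_e_mono:
  assumes "AE x in p. AE y in e x. P x y"
    and "\<And>x y. x \<in> space p \<Longrightarrow> y \<in> space p \<Longrightarrow> P x y \<Longrightarrow> Q x y"
  shows "AE x in p. AE y in e x. Q x y"
proof (rule AE_mp[OF assms(1)], rule AE_I2, rule impI)
  fix x assume x: "x \<in> space p" and P: "AE y in e x. P x y"
  from AE_e_in_space[OF x] P have "AE y in e x. y \<in> space p \<and> P x y"
    by (rule AE_conjI)
  then show "AE y in e x. Q x y"
    by (rule eventually_mono) (use assms(2)[OF x] in blast)
qed

lemma invariant_sets_subset: "invariant_sets p e \<subseteq> sets p"
  by (auto simp: invariant_sets_def)

lemma sigma_sets_invariant_sets:
  "sigma_sets (space p) (invariant_sets p e) = invariant_sets p e"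
proof
  show "sigma_sets (space p) (invariant_sets p e) \<subseteq> invariant_sets p e"
  proof
    fix C assume "C \<in> sigma_sets (space p) (invariant_sets p e)"
    then show "C \<in> invariant_sets p e"
    proof (induction rule: sigma_sets.induct)
      case (Compl C)
      then have "C \<in> sets p" "AE x in p. AE y in e x. y \<in> C \<longleftrightarrow> x \<in> C"
        by (auto simp: invariant_sets_iff)
      then show ?case
        by (auto simp: invariant_sets_iff elim!: AE_AE_e_mono)
    next
      case (Union C)
      then have "range C \<subseteq> sets p" "AE x in p. \<forall>i. AE y in e x. y \<in> C i \<longleftrightarrow> x \<in> C i"
        by (auto simp: invariant_sets_iff AE_all_countable)
      moreover have "y \<in> \<Union>(range C) \<longleftrightarrow> x \<in> \<Union>(range C)"
        if "\<forall>i. y \<in> C i \<longleftrightarrow> x \<in> C i" for x y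
        using that by blast
      ultimately show ?case
        by (auto simp: invariant_sets_iff AE_all_countable[symmetric] elim!: AE_AE_e_mono)
    qed (auto simp: invariant_sets_iff)
  qed
qed (auto intro: sigma_sets.Basic)

lemma sets_invariant_sigma: "sets (sigma (space p) (invariant_sets p e)) = invariant_sets p e"
  using invariant_sets_subset sets.sets_into_space
  by (subst sets_measure_of) (auto simp: sigma_sets_invariant_sets)

lemma space_invariant_sigma: "space (sigma (space p) (invariant_sets p e)) = space p"
  using invariant_sets_subset sets.sets_into_space by (subst space_measure_of) auto

lemma subalgebra_invariant_sigma: "subalgebra p (sigma (space p) (invariant_sets p e))"
  using invariant_sets_subset
  by (simp add: subalgebra_def sets_invariant_sigma space_invariant_sigma)

lemma sets_invariant_space: "sets (invariant_space p e) = invariant_sets p e"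
  unfolding invariant_space_def
  by (simp add: sets_restr_to_subalg[OF subalgebra_invariant_sigma] sets_invariant_sigma)

lemma space_invariant_space: "space (invariant_space p e) = space p"
  by (simp add: invariant_space_def space_restr_to_subalg)

lemma subalgebra_invariant_space: "subalgebra p (invariant_space p e)"
  using invariant_sets_subset
  by (simp add: subalgebra_def sets_invariant_space space_invariant_space)

lemma borel_measurable_invariant_space:
  fixes h :: "'a \<Rightarrow> real"
  assumes h[measurable]: "h \<in> borel_measurable p"
    and const: "AE x in p. AE y in e x. h y = h x"
  shows "h \<in> borel_measurable (invariant_space p e)"
proof -
  have "{x \<in> space p. a < h x} \<in> invariant_sets p e" for a
    using const by (auto simp: invariant_sets_iff elim!: AE_AE_e_mono)
  then show ?thesis
    by (simp add: borel_measurable_iff_greater sets_invariant_space space_invariant_space)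
qed

end

locale stationary_kernel = prob_space p for p :: "'a measure" +
  fixes e :: "'a \<Rightarrow> 'a measure"
  assumes measure_preserving: "measure_preserving_kernel p p e"

sublocale stationary_kernel \<subseteq> markov_endokernel
  using measure_preserving by unfold_locales (simp add: measure_preserving_kernel_def)

context stationary_kernel
begin

lemma integral_measure_e: "B \<in> sets p \<Longrightarrow> (\<integral>x. measure (e x) B \<partial>p) = measure p B"
  using measure_preserving by (simp add: measure_preserving_kernel_def)

lemma bind_e: "bind p e = p"
proof (rule measure_eqI)
  show sets: "sets (bind p e) = sets p"
    using sets_e not_empty by (rule sets_bind)
  interpret bind: prob_space "bind p e"
    by (rule prob_space_bind[OF AE_I2[OF prob_space_e] kernel_subprob_algebra])
  fix B assume "B \<in> sets (bind p e)"
  then have B: "B \<in> sets p" using sets by simp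
  have "measure (bind p e) B = (\<integral>x. measure (e x) B \<partial>p)"
    using kernel_subprob_algebra B by (rule measure_bind)
  then show "emeasure (bind p e) B = emeasure p B"
    using B by (simp add: bind.emeasure_eq_measure emeasure_eq_measure integral_measure_e)
qed

lemma integral_integral_e:
  fixes g :: "'a \<Rightarrow> real"
  assumes g: "g \<in> borel_measurable p" and bounded: "\<And>x. x \<in> space p \<Longrightarrow> \<bar>g x\<bar> \<le> c"
  shows "(\<integral>x. (\<integral>y. g y \<partial>e x) \<partial>p) = (\<integral>x. g x \<partial>p)"
proof -
  have "(\<integral>x. g x \<partial>bind p e) = (\<integral>x. (\<integral>y. g y \<partial>e x) \<partial>p)"
    using g bounded kernel_subprob_algebra
    by (rule integral_bind[where B'=1])
      (auto intro!: AE_I2 simp: finite_measure_axioms prob_space.emeasure_space_1 prob_space_e)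
  then show ?thesis by (simp add: bind_e)
qed

lemma AE_variance_e_eq_0:
  fixes h :: "'a \<Rightarrow> real"
  assumes h[measurable]: "h \<in> borel_measurable p"
    and bounded: "\<And>x. x \<in> space p \<Longrightarrow> \<bar>h x\<bar> \<le> c"
    and harmonic: "AE x in p. (\<integral>y. h y \<partial>e x) = h x"
  shows "AE x in p. prob_space.variance (e x) h = 0"
proof -
  define g where "g x = (\<integral>y. (h y)\<^sup>2 \<partial>e x)" for x
  have [measurable]: "g \<in> borel_measurable p"
    unfolding g_def by measurable
  have h2_bounded: "\<bar>(h x)\<^sup>2\<bar> \<le> c\<^sup>2" if "x \<in> space p" for x
    using power_mono[OF bounded[OF that] abs_ge_zero, of 2] by simp
  have g_bounded: "\<bar>g x\<bar> \<le> c\<^sup>2" if "x \<in> space p" for x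
    unfolding g_def using h2_bounded that by (intro abs_integral_e_le) auto
  have variance_e: "AE x in p. prob_space.variance (e x) h = g x - (h x)\<^sup>2"
    using AE_space harmonic
  proof eventually_elim
    case (elim x)
    interpret E: prob_space "e x" using prob_space_e[OF elim(1)] .
    show ?case
      unfolding g_def elim(2)[symmetric] using bounded h2_bounded elim(1)
      by (intro E.variance_eq integrable_e_bounded) auto
  qed
  have integrable_g: "integrable p g" and integrable_h2: "integrable p (\<lambda>x. (h x)\<^sup>2)"
    using g_bounded h2_bounded by (auto intro!: integrable_const_bound[where B="c\<^sup>2"])
  have "(\<integral>x. g x \<partial>p) = (\<integral>x. (h x)\<^sup>2 \<partial>p)"
    unfolding g_def using h2_bounded by (intro integral_integral_e) auto
  then have "(\<integral>x. g x - (h x)\<^sup>2 \<partial>p) = 0"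
    using integrable_g integrable_h2 by simp
  moreover have "AE x in p. 0 \<le> g x - (h x)\<^sup>2"
    using AE_space variance_e
    by eventually_elim (metis prob_space.variance_positive prob_space_e)
  ultimately have "AE x in p. g x - (h x)\<^sup>2 = 0"
    using integral_nonneg_eq_0_iff_AE[OF Bochner_Integration.integrable_diff,
        OF integrable_g integrable_h2]
    by blast
  with variance_e show ?thesis
    by eventually_elim simp
qed

lemma harmonic_AE_constant:
  fixes h :: "'a \<Rightarrow> real"
  assumes h[measurable]: "h \<in> borel_measurable p"
    and bounded: "\<And>x. x \<in> space p \<Longrightarrow> \<bar>h x\<bar> \<le> c"
    and harmonic: "AE x in p. (\<integral>y. h y \<partial>e x) = h x"
  shows "AE x in p. AE y in e x. h y = h x"
proof -
  have "AE x in p. prob_space.variance (e x) h = 0"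
    using h bounded harmonic by (rule AE_variance_e_eq_0)
  with AE_space harmonic show ?thesis
    by eventually_elim (rule AE_e_eq_if_variance_e_eq_0[OF h bounded])
qed

lemma set_integral_measure_e_invariant:
  assumes C: "C \<in> invariant_sets p e" and B: "B \<in> sets p"
  shows "(\<integral>x\<in>C. measure (e x) B \<partial>p) = measure p (C \<inter> B)"
proof -
  have C_sets: "C \<in> sets p" and C_invariant: "AE x in p. AE y in e x. y \<in> C \<longleftrightarrow> x \<in> C"
    using C by (auto simp: invariant_sets_iff)
  from AE_space C_invariant
  have "AE x in p. measure (e x) (C \<inter> B) = indicator C x * measure (e x) B"
  proof eventually_elim
    case (elim x)
    have "AE y in e x. y \<in> C \<inter> B \<longleftrightarrow> y \<in> (if x \<in> C then B else {})"
      using elim(2) by eventually_elim auto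
    then have "measure (e x) (C \<inter> B) = measure (e x) (if x \<in> C then B else {})"
      using B C_sets by (intro measure_eq_AE) (auto simp: sets_e[OF elim(1)])
    then show ?case by simp
  qed
  then have "(\<integral>x\<in>C. measure (e x) B \<partial>p) = (\<integral>x. measure (e x) (C \<inter> B) \<partial>p)"
    unfolding set_lebesgue_integral_def using B C_sets by (intro integral_cong_AE) auto
  also have "\<dots> = measure p (C \<inter> B)"
    using B C_sets by (intro integral_measure_e) auto
  finally show ?thesis .
qed

end

locale idempotent_stationary_kernel = stationary_kernel +
  assumes idempotent: "kernel_ae_eq p p (kcomp e e) e"
begin

lemma harmonic_measure_e:
  assumes B: "B \<in> sets p"
  shows "AE x in p. (\<integral>y. measure (e y) B \<partial>e x) = measure (e x) B"
  using AE_space idempotent[unfolded kernel_ae_eq_def kcomp_def, rule_format, OF B]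
proof eventually_elim
  case (elim x)
  interpret E: prob_space "e x" using prob_space_e[OF elim(1)] .
  have "e \<in> e x \<rightarrow>\<^sub>M subprob_algebra p"
    using kernel_subprob_algebra by (simp add: measurable_cong_sets[OF sets_e[OF elim(1)] refl])
  then have "measure (bind (e x) e) B = (\<integral>y. measure (e y) B \<partial>e x)"
    using B by (rule E.measure_bind)
  with elim(2) show ?case by simp
qed

lemma AE_measure_e_constant:
  "B \<in> sets p \<Longrightarrow> AE x in p. AE y in e x. measure (e y) B = measure (e x) B"
  by (rule harmonic_AE_constant[where c=1]) (auto simp: harmonic_measure_e measure_e_le_1)

lemma real_cond_exp_indicator_invariant:
  assumes B: "B \<in> sets p"
  shows "AE x in p. real_cond_exp p (invariant_space p e) (indicator B) x = measure (e x) B"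
proof -
  interpret finite_measure_subalgebra p "invariant_space p e"
    using subalgebra_invariant_space by unfold_locales
  show ?thesis
  proof (rule real_cond_exp_charact)
    fix A assume "A \<in> sets (invariant_space p e)"
    then have A: "A \<in> invariant_sets p e" by (simp add: sets_invariant_space)
    then have "A \<in> sets p" using invariant_sets_subset by blast
    then have "(\<integral>x\<in>A. indicator B x \<partial>p) = measure p (A \<inter> B)"
      using B by (simp add: set_lebesgue_integral_def indicator_inter_arith[symmetric] mult.commute)
    then show "(\<integral>x\<in>A. indicator B x \<partial>p) = (\<integral>x\<in>A. measure (e x) B \<partial>p)"
      using set_integral_measure_e_invariant[OF A B] by simp
  next
    show "(\<lambda>x. measure (e x) B) \<in> borel_measurable (invariant_space p e)"
      using B AE_measure_e_constant by (intro borel_measurable_invariant_space) auto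
  qed (use B in \<open>auto intro!: integrable_const_bound[where B=1] AE_I2 simp: measure_e_le_1\<close>)
qed

end

theorem theorem4p6:
  fixes p :: "'a measure" and e :: "'a \<Rightarrow> 'a measure" and \<pi>p :: "'a \<Rightarrow> 'a measure"
  defines "F \<equiv> invariant_space p e"
  defines "\<pi> \<equiv> (\<lambda>x. return F x)"
  assumes "prob_space p"
    and "standard_borel p"
    and "measure_preserving_kernel p p e"
    and "kernel_ae_eq p p (kcomp e e) e"
    and "measure_preserving_kernel F p \<pi>p"
    and "\<forall>A\<in>sets p. AE x in p. measure (\<pi>p x) A = real_cond_exp p F (indicator A) x"
  shows "kernel_ae_eq F F (kcomp \<pi> \<pi>p) (return F) \<and> kernel_ae_eq p p (kcomp \<pi>p \<pi>) e"
proof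
  \<comment> \<open>The standard Borel hypothesis only serves to make a regular conditional probability
    \<open>\<pi>p\<close> exist; here \<open>\<pi>p\<close> is given.\<close>
  interpret idempotent_stationary_kernel p e
    using assms(3,5,6)
    by (simp add: idempotent_stationary_kernel_def idempotent_stationary_kernel_axioms_def
        stationary_kernel_def stationary_kernel_axioms_def)
  have \<pi>p: "\<pi>p \<in> F \<rightarrow>\<^sub>M prob_algebra p"
    using assms(7) by (simp add: measure_preserving_kernel_def markov_kernel_def)
  show "kernel_ae_eq F F (kcomp \<pi> \<pi>p) (return F)"
    using prob_space_axioms subalgebra_invariant_sigma \<pi>p assms(8)
    unfolding \<pi>_def F_def invariant_space_def by (rule kcomp_return_regular_cond_prob)
  show "kernel_ae_eq p p (kcomp \<pi>p \<pi>) e"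
    unfolding kernel_ae_eq_def
  proof
    fix B assume B: "B \<in> sets p"
    have kcomp_\<pi>: "kcomp \<pi>p \<pi> x = \<pi>p x" if "x \<in> space p" for x
      using bind_return[OF measurable_prob_algebraD[OF \<pi>p]] that
      by (simp add: kcomp_def \<pi>_def F_def space_invariant_space)
    from AE_space assms(8)[rule_format, OF B] real_cond_exp_indicator_invariant[OF B]
    show "AE x in p. measure (kcomp \<pi>p \<pi> x) B = measure (e x) B"
      unfolding F_def by eventually_elim (simp add: kcomp_\<pi>)
  qed
qed

end
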